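(* Consider the Group Lasso: $\mathbf X\in\mathbb R^{n\times p}$, coefficients partitioned into $G$ groups with fixed weights $w_g>0$, $\widehat{\boldsymbol\beta}=\arg\min_{\boldsymbol\beta}\tfrac12\|\mathbf y-\mathbf X\boldsymbol\beta\|_2^2+\gamma\sum_g w_g\|\boldsymbol\beta_g\|_2$, $\gamma\in(\gamma_l,\gamma_{l+1})$ for consecutive transition points, and $\widehat{df}_\gamma=\mathrm{trace}[(\mathbf I_n+\gamma\mathbf B)^{-1}\mathbf A]$ with $\mathbf A=\mathbf X_{\mathcal A_G}(\mathbf X_{\mathcal A_G}^\top\mathbf X_{\mathcal A_G})^{-1}\mathbf X_{\mathcal A_G}^\top$ and $\mathbf B=\mathbf X_{\mathcal A_G}(\mathbf X_{\mathcal A_G}^\top\mathbf X_{\mathcal A_G})^{-1}\boldsymbol\Pi_{\mathcal A_G}(\mathbf X_{\mathcal A_G}^\top\mathbf X_{\mathcal A_G})^{-1}\mathbf X_{\mathcal A_G}^\top$ (for $\mathbf X^\top\mathbf X=\mathbf I_p$ these reduce to $\mathbf X_{\mathcal A_G}\mathbf X_{\mathcal A_G}^\top$ and $\mathbf X_{\mathcal A_G}\boldsymbol\Pi_{\mathcal A_G}\mathbf X_{\mathcal A_G}^\top$). If every group has cardinality $n_g=1$, then $\widehat{df}_\gamma=|\mathcal A|$, the number of nonzero coefficients of $\widehat{\boldsymbol\beta}$.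
   Context: $\boldsymbol\beta_g,\widehat{\boldsymbol\beta}_g\in\mathbb R^{n_g}$ are group subvectors; $\mathcal A_G=\{g:\|\widehat{\boldsymbol\beta}_g\|_2\ne0\}$ the active groups; $\mathcal A=\{j:\widehat\beta_j\ne0\}$; $\mathbf X_{\mathcal A_G}$ the columns of $\mathbf X$ in active groups, with invertible Gram matrix; $\boldsymbol\Pi_{\mathcal A_G}=\mathrm{blockdiag}_{g\in\mathcal A_G}\big(w_g[\mathbf I_{n_g}/\|\widehat{\boldsymbol\beta}_g\|_2-\widehat{\boldsymbol\beta}_g\widehat{\boldsymbol\beta}_g^\top/\|\widehat{\boldsymbol\beta}_g\|_2^3]\big)$. Transition points are the values of $\gamma>0$ at which the active set changes. *)

theory Defs
  imports "Jordan_Normal_Form.Gauss_Jordan_Elimination" "Jordan_Normal_Form.DL_Submatrix"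
begin

(* Coefficient vectors are functions nat => real; only indices j < p matter.
   Groups: grp j \<in> {0..<G} is the group of coefficient j; group g = {j<p. grp j = g}. *)

definition rss :: "real mat \<Rightarrow> real vec \<Rightarrow> (nat \<Rightarrow> real) \<Rightarrow> real" where
  "rss X y b = (\<Sum>i<dim_row X. (y $ i - (X *\<^sub>v vec (dim_col X) b) $ i)^2)"

definition gnorm :: "nat \<Rightarrow> (nat \<Rightarrow> nat) \<Rightarrow> (nat \<Rightarrow> real) \<Rightarrow> nat \<Rightarrow> real" where
  "gnorm p grp b g = sqrt (\<Sum>j\<in>{j. j < p \<and> grp j = g}. (b j)^2)"

definition glasso_obj :: "real mat \<Rightarrow> real vec \<Rightarrow> (nat \<Rightarrow> nat) \<Rightarrow> nat \<Rightarrow> (nat \<Rightarrow> real)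
    \<Rightarrow> real \<Rightarrow> (nat \<Rightarrow> real) \<Rightarrow> real" where
  "glasso_obj X y grp G w \<gamma> b =
     rss X y b / 2 + \<gamma> * (\<Sum>g<G. w g * gnorm (dim_col X) grp b g)"

definition is_glasso_sol where
  "is_glasso_sol X y grp G w \<gamma> b \<longleftrightarrow> (\<forall>b'. glasso_obj X y grp G w \<gamma> b \<le> glasso_obj X y grp G w \<gamma> b')"

definition active_groups :: "nat \<Rightarrow> (nat \<Rightarrow> nat) \<Rightarrow> nat \<Rightarrow> (nat \<Rightarrow> real) \<Rightarrow> nat set" where
  "active_groups p grp G b = {g. g < G \<and> gnorm p grp b g \<noteq> 0}"

definition active_cols :: "nat \<Rightarrow> (nat \<Rightarrow> nat) \<Rightarrow> nat \<Rightarrow> (nat \<Rightarrow> real) \<Rightarrow> nat set" where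
  "active_cols p grp G b = {j. j < p \<and> grp j \<in> active_groups p grp G b}"

definition XA :: "real mat \<Rightarrow> (nat \<Rightarrow> nat) \<Rightarrow> nat \<Rightarrow> (nat \<Rightarrow> real) \<Rightarrow> real mat" where
  "XA X grp G b = submatrix X UNIV (active_cols (dim_col X) grp G b)"

(* Pi_{A_G}, indexed consistently with the columns of X_{A_G} (block diagonal up to this
   ordering of the active columns) *)
definition PiA :: "real mat \<Rightarrow> (nat \<Rightarrow> nat) \<Rightarrow> nat \<Rightarrow> (nat \<Rightarrow> real) \<Rightarrow> (nat \<Rightarrow> real) \<Rightarrow> real mat" where
  "PiA X grp G w b =
    (let p = dim_col X; S = active_cols p grp G b; k = card S in
     mat k k (\<lambda>(l, l'). let j = pick S l; j' = pick S l'; g = grp j; ng = gnorm p grp b g in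
        if grp j' = g then w g * ((if l = l' then 1 else 0) / ng - b j * b j' / ng ^ 3) else 0))"

definition gram_inv :: "real mat \<Rightarrow> (nat \<Rightarrow> nat) \<Rightarrow> nat \<Rightarrow> (nat \<Rightarrow> real) \<Rightarrow> real mat" where
  "gram_inv X grp G b = the (mat_inverse (transpose_mat (XA X grp G b) * XA X grp G b))"

definition Amat :: "real mat \<Rightarrow> (nat \<Rightarrow> nat) \<Rightarrow> nat \<Rightarrow> (nat \<Rightarrow> real) \<Rightarrow> real mat" where
  "Amat X grp G b = XA X grp G b * gram_inv X grp G b * transpose_mat (XA X grp G b)"

definition Bmat :: "real mat \<Rightarrow> (nat \<Rightarrow> nat) \<Rightarrow> nat \<Rightarrow> (nat \<Rightarrow> real) \<Rightarrow> (nat \<Rightarrow> real) \<Rightarrow> real mat" where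
  "Bmat X grp G w b = XA X grp G b * gram_inv X grp G b * PiA X grp G w b
                      * gram_inv X grp G b * transpose_mat (XA X grp G b)"

definition mat_trace :: "real mat \<Rightarrow> real" where
  "mat_trace M = (\<Sum>i<dim_row M. M $$ (i, i))"

definition df_hat :: "real mat \<Rightarrow> (nat \<Rightarrow> nat) \<Rightarrow> nat \<Rightarrow> (nat \<Rightarrow> real) \<Rightarrow> real \<Rightarrow> (nat \<Rightarrow> real) \<Rightarrow> real" where
  "df_hat X grp G w \<gamma> b =
     mat_trace (the (mat_inverse (1\<^sub>m (dim_row X) + \<gamma> \<cdot>\<^sub>m Bmat X grp G w b)) * Amat X grp G b)"

end

theory Submission
  imports Defs
begin

(* With singleton groups every diagonal block of PiA is the 1 x 1 matrix
   w_g (1/|b_j| - b_j^2/|b_j|^3) = 0, so B = 0 and df is the trace of the hat matrix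
   A = X_A (X_A^T X_A)^-1 X_A^T.  By cyclicity of the trace this is the trace of the
   identity on the active columns, and with singleton groups the active columns are
   exactly the nonzero coefficients. *)

lemma mat_trace_mult_comm:
  fixes A B :: "real mat"
  assumes "A \<in> carrier_mat n k" "B \<in> carrier_mat k n"
  shows "mat_trace (A * B) = mat_trace (B * A)"
proof -
  have "mat_trace (A * B) = (\<Sum>i<n. \<Sum>j<k. A $$ (i, j) * B $$ (j, i))"
    using assms unfolding mat_trace_def
    by (auto simp: scalar_prod_def atLeast0LessThan intro!: sum.cong)
  also have "\<dots> = (\<Sum>j<k. \<Sum>i<n. B $$ (j, i) * A $$ (i, j))"
    by (subst sum.swap) (simp add: mult.commute)
  also have "\<dots> = mat_trace (B * A)"
    using assms unfolding mat_trace_def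
    by (auto simp: scalar_prod_def atLeast0LessThan intro!: sum.cong)
  finally show ?thesis .
qed

lemma mat_trace_one [simp]: "mat_trace (1\<^sub>m k) = real k"
  unfolding mat_trace_def by simp

lemma mat_inverse_invertible:
  fixes M :: "'a :: field mat"
  assumes M: "M \<in> carrier_mat k k" and "invertible_mat M"
  obtains Mi where "mat_inverse M = Some Mi" "M * Mi = 1\<^sub>m k" "Mi * M = 1\<^sub>m k"
    "Mi \<in> carrier_mat k k"
proof -
  obtain B where B: "M * B = 1\<^sub>m k" "B * M = 1\<^sub>m (dim_row B)"
    using assms unfolding invertible_mat_def inverts_mat_def by auto
  have "B \<in> carrier_mat k k"
    using arg_cong[OF B(1), of dim_col] arg_cong[OF B(2), of dim_col] M by auto
  then have "M \<in> Units (ring_mat TYPE('a) k ())"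
    using M B unfolding Units_def by (auto simp: ring_mat_simps)
  then obtain Mi where "mat_inverse M = Some Mi"
    using mat_inverse(1)[OF M, where b = "()"] by (cases "mat_inverse M") auto
  with mat_inverse(2)[OF M] that show ?thesis by blast
qed

lemma mat_inverse_one: "mat_inverse (1\<^sub>m n :: 'a :: field mat) = Some (1\<^sub>m n)"
proof -
  have "invertible_mat (1\<^sub>m n :: 'a mat)"
    unfolding invertible_mat_def inverts_mat_def by (auto intro!: exI[of _ "1\<^sub>m n"])
  then obtain C where "mat_inverse (1\<^sub>m n :: 'a mat) = Some C" "1\<^sub>m n * C = 1\<^sub>m n"
      "C \<in> carrier_mat n n"
    by (rule mat_inverse_invertible[OF one_carrier_mat])
  then show ?thesis by simp
qed

lemma mat_trace_hat_mat:
  fixes X :: "real mat"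
  assumes X: "X \<in> carrier_mat n k" and "invertible_mat (X\<^sup>T * X)"
  shows "mat_trace (X * the (mat_inverse (X\<^sup>T * X)) * X\<^sup>T) = real k"
proof -
  have "X\<^sup>T * X \<in> carrier_mat k k" using X by simp
  then obtain Mi where Mi: "mat_inverse (X\<^sup>T * X) = Some Mi" "X\<^sup>T * X * Mi = 1\<^sub>m k"
      "Mi \<in> carrier_mat k k"
    using assms(2) by (rule mat_inverse_invertible)
  have "mat_trace (X * Mi * X\<^sup>T) = mat_trace (X\<^sup>T * (X * Mi))"
    using X Mi(3) by (intro mat_trace_mult_comm) auto
  also have "X\<^sup>T * (X * Mi) = X\<^sup>T * X * Mi"
    using X Mi(3) by simp
  also have "\<dots> = 1\<^sub>m k" by (rule Mi(2))
  finally show ?thesis unfolding Mi(1) by simp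
qed

lemma inj_on_groups_if_singleton_groups:
  assumes "\<forall>j<p. grp j < G" and "\<forall>g<G. card {j. j < p \<and> grp j = g} = 1"
  shows "inj_on grp {..<p}"
proof (rule inj_onI)
  fix j j' assume j: "j \<in> {..<p}" "j' \<in> {..<p}" "grp j = grp j'"
  then have "card {i. i < p \<and> grp i = grp j} = 1" using assms by auto
  then obtain a where a: "{i. i < p \<and> grp i = grp j} = {a}" by (rule card_1_singletonE)
  have "j \<in> {i. i < p \<and> grp i = grp j}" "j' \<in> {i. i < p \<and> grp i = grp j}" using j by auto
  then show "j = j'" unfolding a by simp
qed

lemma gnorm_eq_abs_if_inj_on:
  assumes "inj_on grp {..<p}" and "j < p"
  shows "gnorm p grp b (grp j) = \<bar>b j\<bar>"
proof -
  have "{i. i < p \<and> grp i = grp j} = {j}"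
    using assms by (auto simp: inj_on_eq_iff)
  then show ?thesis unfolding gnorm_def by simp
qed

lemma active_cols_eq_nonzero_if_inj_on:
  assumes "inj_on grp {..<p}" and "\<forall>j<p. grp j < G"
  shows "active_cols p grp G b = {j. j < p \<and> b j \<noteq> 0}"
  using assms unfolding active_cols_def active_groups_def by (auto simp: gnorm_eq_abs_if_inj_on)

abbreviation n_active_cols :: "real mat \<Rightarrow> (nat \<Rightarrow> nat) \<Rightarrow> nat \<Rightarrow> (nat \<Rightarrow> real) \<Rightarrow> nat" where
  "n_active_cols X grp G b \<equiv> card (active_cols (dim_col X) grp G b)"

lemma XA_carrier:
  "XA X grp G b \<in> carrier_mat (dim_row X) (n_active_cols X grp G b)"
proof -
  have "{j. j < dim_col X \<and> j \<in> active_cols (dim_col X) grp G b} = active_cols (dim_col X) grp G b"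
    unfolding active_cols_def by blast
  then show ?thesis unfolding XA_def carrier_mat_def by (simp add: dim_submatrix)
qed

lemma PiA_carrier:
  "PiA X grp G w b \<in> carrier_mat (n_active_cols X grp G b) (n_active_cols X grp G b)"
  unfolding PiA_def Let_def by simp

lemma PiA_eq_0_if_inj_on:
  assumes inj: "inj_on grp {..<dim_col X}"
  shows "PiA X grp G w b = 0\<^sub>m (n_active_cols X grp G b) (n_active_cols X grp G b)"
proof (rule eq_matI)
  let ?S = "active_cols (dim_col X) grp G b" and ?k = "n_active_cols X grp G b"
  fix l l' assume l: "l < dim_row (0\<^sub>m ?k ?k)" "l' < dim_col (0\<^sub>m ?k ?k)"
  define j j' where "j = pick ?S l" and "j' = pick ?S l'"
  have j: "j \<in> ?S" "j' \<in> ?S" "card {a\<in>?S. a < j} = l" "card {a\<in>?S. a < j'} = l'"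
    unfolding j_def j'_def using l by (auto intro: pick_in_set_le card_pick_le)
  have "j < dim_col X" using j(1) unfolding active_cols_def by simp
  then have "PiA X grp G w b $$ (l, l') = (if grp j' = grp j
      then w (grp j) * ((if l = l' then 1 else 0) / \<bar>b j\<bar> - b j * b j' / \<bar>b j\<bar> ^ 3) else 0)"
    using l unfolding PiA_def Let_def j_def j'_def by (simp add: gnorm_eq_abs_if_inj_on[OF inj])
  also have "\<dots> = 0"
  proof (cases "grp j' = grp j")
    case True
    then have "j' = j" using inj j(1,2) unfolding active_cols_def by (auto dest: inj_onD)
    moreover have "b j \<noteq> 0"
      using j(1) unfolding active_cols_def active_groups_def
      by (auto simp: gnorm_eq_abs_if_inj_on[OF inj])
    moreover have "l = l'" using j(3,4) \<open>j' = j\<close> by simp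
    ultimately show ?thesis by (simp add: power3_eq_cube)
  qed simp
  also have "\<dots> = 0\<^sub>m ?k ?k $$ (l, l')" using l by simp
  finally show "PiA X grp G w b $$ (l, l') = 0\<^sub>m ?k ?k $$ (l, l')" .
qed (use PiA_carrier[of X grp G w b] in auto)

lemma gram_inv_carrier:
  assumes "invertible_mat ((XA X grp G b)\<^sup>T * XA X grp G b)"
  shows "gram_inv X grp G b \<in> carrier_mat (n_active_cols X grp G b) (n_active_cols X grp G b)"
proof -
  have "(XA X grp G b)\<^sup>T * XA X grp G b
      \<in> carrier_mat (n_active_cols X grp G b) (n_active_cols X grp G b)"
    using XA_carrier[of X grp G b] by simp
  then obtain Mi where "mat_inverse ((XA X grp G b)\<^sup>T * XA X grp G b) = Some Mi"
      "Mi \<in> carrier_mat (n_active_cols X grp G b) (n_active_cols X grp G b)"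
    using assms by (rule mat_inverse_invertible)
  then show ?thesis by (simp add: gram_inv_def)
qed

lemma Bmat_eq_0_if_PiA_eq_0:
  fixes X :: "real mat"
  assumes "invertible_mat ((XA X grp G b)\<^sup>T * XA X grp G b)"
    and "PiA X grp G w b = 0\<^sub>m (n_active_cols X grp G b) (n_active_cols X grp G b)"
  shows "Bmat X grp G w b = 0\<^sub>m (dim_row X) (dim_row X)"
  using XA_carrier[of X grp G b] gram_inv_carrier[OF assms(1)] unfolding Bmat_def assms(2)
  by simp

lemma Amat_carrier: "Amat X grp G b \<in> carrier_mat (dim_row X) (dim_row X)"
  using XA_carrier[of X grp G b] unfolding Amat_def by auto

lemma df_hat_eq_mat_trace_Amat_if_Bmat_eq_0:
  assumes "Bmat X grp G w b = 0\<^sub>m (dim_row X) (dim_row X)"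
  shows "df_hat X grp G w \<gamma> b = mat_trace (Amat X grp G b)"
  using Amat_carrier[of X grp G b] unfolding df_hat_def assms by (simp add: mat_inverse_one)

theorem corollaryS4:
  fixes X :: "real mat" and y :: "real vec" and n p G :: nat
    and grp :: "nat \<Rightarrow> nat" and w :: "nat \<Rightarrow> real"
    and bhat :: "real \<Rightarrow> nat \<Rightarrow> real" and \<gamma> \<gamma>l \<gamma>u :: real
  assumes "X \<in> carrier_mat n p" and "y \<in> carrier_vec n"
    and "\<forall>j<p. grp j < G"
    and "\<forall>g<G. w g > 0"
    and "0 \<le> \<gamma>l" and "\<gamma>l < \<gamma>" and "\<gamma> < \<gamma>u"
    and "\<forall>t\<in>{\<gamma>l<..<\<gamma>u}. is_glasso_sol X y grp G w t (bhat t)"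
    and "\<forall>t\<in>{\<gamma>l<..<\<gamma>u}. active_groups p grp G (bhat t) = active_groups p grp G (bhat \<gamma>)"
    and "invertible_mat (transpose_mat (XA X grp G (bhat \<gamma>)) * XA X grp G (bhat \<gamma>))"
    and "\<forall>g<G. card {j. j < p \<and> grp j = g} = 1"
  shows "df_hat X grp G w \<gamma> (bhat \<gamma>) = real (card {j. j < p \<and> bhat \<gamma> j \<noteq> 0})"
proof -
  note gram_invertible = assms(10)
  have dims: "dim_row X = n" "dim_col X = p" using assms(1) by auto
  have inj: "inj_on grp {..<p}"
    using assms(3,11) by (rule inj_on_groups_if_singleton_groups)
  then have "PiA X grp G w (bhat \<gamma>)
      = 0\<^sub>m (n_active_cols X grp G (bhat \<gamma>)) (n_active_cols X grp G (bhat \<gamma>))"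
    using dims by (intro PiA_eq_0_if_inj_on) simp
  then have "Bmat X grp G w (bhat \<gamma>) = 0\<^sub>m (dim_row X) (dim_row X)"
    by (rule Bmat_eq_0_if_PiA_eq_0[OF gram_invertible])
  then have "df_hat X grp G w \<gamma> (bhat \<gamma>) = mat_trace (Amat X grp G (bhat \<gamma>))"
    by (rule df_hat_eq_mat_trace_Amat_if_Bmat_eq_0)
  also have "\<dots> = real (n_active_cols X grp G (bhat \<gamma>))"
    using mat_trace_hat_mat[OF XA_carrier gram_invertible] unfolding Amat_def gram_inv_def .
  also have "active_cols (dim_col X) grp G (bhat \<gamma>) = {j. j < p \<and> bhat \<gamma> j \<noteq> 0}"
    unfolding dims using inj assms(3) by (rule active_cols_eq_nonzero_if_inj_on)
  finally show ?thesis .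
qed

end
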